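(* Let $\nu\in\mathbb{C}$ and $a,b,x>0$. Then $$J_{\nu}(ax)J_{\nu}(bx)=\left(\frac{abx}{2\sqrt{a^2+b^2}}\right)^{\nu}\sum_{r=0}^{\infty}\frac{1}{r!\,\Gamma(\nu+r+1)}\left(\frac{abx}{2\sqrt{a^2+b^2}}\right)^{2r}J_{\nu+2r}\!\left(x\sqrt{a^2+b^2}\right).$$
   Context: $J_\nu$ is the Bessel function of the first kind of order $\nu$; $1/\Gamma$ is understood as the entire reciprocal Gamma function. *)

theory Defs
  imports "HOL-Analysis.Analysis"
begin

text \<open>Bessel function of the first kind of (complex) order nu, via its power series,
  using the principal branch of the power and the entire reciprocal Gamma function rGamma.\<close>
definition besselJ :: "complex \<Rightarrow> complex \<Rightarrow> complex" where
  "besselJ \<nu> z = (\<Sum>k. ((-1) ^ k * rGamma (\<nu> + of_nat k + 1) / of_nat (fact k))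
                       * (z / 2) powr \<nu> * (z / 2) ^ (2 * k))"

end

theory Submission
  imports Defs
begin

(* Put F_b(Z) = \<Sum>\<^sub>n Z^n / (n! \<Gamma>(b + n)), the regularized 0F1(;b;Z) (hyp0F1_reg b Z below);
   it is entire because n \<mapsto> 1/\<Gamma>(b + n) is bounded, and J_\<nu>(z) = (z/2)^\<nu> F_(\<nu>+1)(-z^2/4).
   With u = ax/2, v = bx/2
   the theorem becomes the multiplication formula
     F_b(U) F_b(V) = \<Sum>\<^sub>r (UV)^r / (r! \<Gamma>(b + r)) F_(b+2r)(U + V)
   at U = -u^2, V = -v^2, b = \<nu> + 1.  Expanding F_(b+2r)(U + V) binomially gives an absolutely
   convergent triple series in (r, j, i); grouping it by (k, l) = (r + j, r + i), the coefficient of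
   U^k V^l is the one of F_b(U) F_b(V) by the Chu-Vandermonde type identity
     1/(\<Gamma>(b+k) \<Gamma>(b+l) k! l!) = \<Sum>\<^sub>r 1/(\<Gamma>(b+k+l) \<Gamma>(b+r) r! (k-r)! (l-r)!)
   for rising factorials. *)

lemma pochhammer_add_one_Suc:
  fixes z :: "'a::comm_semiring_1"
  shows "pochhammer (z + 1) (Suc n) = pochhammer z (Suc n) + of_nat (Suc n) * pochhammer (z + 1) n"
proof -
  have "pochhammer (z + 1) (Suc n) = pochhammer (z + 1) n * (z + 1 + of_nat n)"
    by (rule pochhammer_Suc)
  moreover have "pochhammer z (Suc n) = z * pochhammer (z + 1) n"
    by (rule pochhammer_rec)
  ultimately show ?thesis
    by (simp add: algebra_simps)
qed

lemma Suc_choose_Suc_mult_fact: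
  "(Suc k choose Suc r) * (Suc n choose Suc r) * fact (Suc r) =
     (k choose Suc r) * (Suc n choose Suc r) * fact (Suc r) + Suc n * ((k choose r) * (n choose r) * fact r)"
proof -
  have "(Suc n choose Suc r) * fact (Suc r) = Suc r * (Suc n choose Suc r) * (fact r :: nat)"
    by (simp add: fact_Suc algebra_simps)
  also have "\<dots> = Suc n * ((n choose r) * fact r)"
    by (simp only: Suc_times_binomial mult.assoc)
  finally have "(Suc n choose Suc r) * fact (Suc r) = Suc n * ((n choose r) * fact r)" .
  then show ?thesis
    unfolding binomial_Suc_Suc[of k r] add_mult_distrib mult.assoc by (simp only: ac_simps)
qed

lemma pochhammer_add_of_nat_eq_sum:
  fixes y :: "'a::comm_semiring_1"
  shows "pochhammer (y + of_nat k) l =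
           (\<Sum>r\<le>l. of_nat ((k choose r) * (l choose r) * fact r) * pochhammer (y + of_nat r) (l - r))"
proof (induction k arbitrary: y l)
  case 0
  show ?case
    by (cases l) (simp_all add: sum.atMost_Suc_shift del: sum.atMost_Suc)
next
  case (Suc k)
  show ?case
  proof (cases l)
    case 0
    then show ?thesis by simp
  next
    case (Suc n)
    define g where "g r = pochhammer (y + of_nat r) (Suc n - r)" for r
    have "pochhammer (y + of_nat (Suc k)) (Suc n) =
        pochhammer (y + of_nat k) (Suc n) + of_nat (Suc n) * pochhammer ((y + 1) + of_nat k) n"
      using pochhammer_add_one_Suc[of "y + of_nat k" n] by (simp add: algebra_simps)
    also have "pochhammer (y + of_nat k) (Suc n) = g 0 +
        (\<Sum>r\<le>n. of_nat ((k choose Suc r) * (Suc n choose Suc r) * fact (Suc r)) * g (Suc r))"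
      unfolding Suc.IH[of y "Suc n"] g_def by (subst sum.atMost_Suc_shift) simp
    also have "pochhammer ((y + 1) + of_nat k) n =
        (\<Sum>r\<le>n. of_nat ((k choose r) * (n choose r) * fact r) * g (Suc r))"
      unfolding Suc.IH[of "y + 1" n] g_def by (intro sum.cong) (auto simp: algebra_simps)
    also have "g 0 + (\<Sum>r\<le>n. of_nat ((k choose Suc r) * (Suc n choose Suc r) * fact (Suc r)) * g (Suc r))
        + of_nat (Suc n) * (\<Sum>r\<le>n. of_nat ((k choose r) * (n choose r) * fact r) * g (Suc r))
      = g 0 + (\<Sum>r\<le>n. of_nat ((Suc k choose Suc r) * (Suc n choose Suc r) * fact (Suc r)) * g (Suc r))"
      unfolding Suc_choose_Suc_mult_fact by (simp add: sum.distrib sum_distrib_left algebra_simps)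
    also have "\<dots> = (\<Sum>r\<le>Suc n. of_nat ((Suc k choose r) * (Suc n choose r) * fact r) * g r)"
      by (subst sum.atMost_Suc_shift) simp
    finally show ?thesis
      using Suc g_def by simp
  qed
qed

lemma pochhammer_add_of_nat_div_fact:
  fixes y :: "'a::field_char_0"
  shows "pochhammer (y + of_nat k) l / (fact k * fact l) =
           (\<Sum>r\<le>min k l. pochhammer (y + of_nat r) (l - r) / (fact r * fact (k - r) * fact (l - r)))"
proof -
  have "pochhammer (y + of_nat k) l / (fact k * fact l) =
      (\<Sum>r\<le>l. of_nat ((k choose r) * (l choose r) * fact r) * pochhammer (y + of_nat r) (l - r) / (fact k * fact l))"
    by (subst pochhammer_add_of_nat_eq_sum) (simp add: sum_divide_distrib)
  also have "\<dots> = (\<Sum>r\<le>min k l. of_nat ((k choose r) * (l choose r) * fact r) * pochhammer (y + of_nat r) (l - r) / (fact k * fact l))"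
    by (intro sum.mono_neutral_right) auto
  also have "\<dots> = (\<Sum>r\<le>min k l. pochhammer (y + of_nat r) (l - r) / (fact r * fact (k - r) * fact (l - r)))"
  proof (intro sum.cong refl)
    fix r assume "r \<in> {..min k l}"
    then have "r \<le> k" and "r \<le> l" by auto
    then have "(fact k * fact l :: 'a) =
        of_nat ((k choose r) * (l choose r) * fact r) * (fact r * fact (k - r) * fact (l - r))"
      by (simp add: binomial_fact algebra_simps)
    moreover have "of_nat ((k choose r) * (l choose r) * fact r) \<noteq> (0::'a)"
      using \<open>r \<le> k\<close> \<open>r \<le> l\<close> by (simp add: binomial_eq_0_iff)
    ultimately show "of_nat ((k choose r) * (l choose r) * fact r) * pochhammer (y + of_nat r) (l - r) / (fact k * fact l) =
        pochhammer (y + of_nat r) (l - r) / (fact r * fact (k - r) * fact (l - r))"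
      by simp
  qed
  finally show ?thesis .
qed

lemma rGamma_mult_rGamma_div_fact:
  fixes b :: complex
  shows "rGamma (b + of_nat k) * rGamma (b + of_nat l) / (fact k * fact l) =
           rGamma (b + of_nat (k + l)) *
             (\<Sum>r\<le>min k l. rGamma (b + of_nat r) / (fact r * fact (k - r) * fact (l - r)))"
proof -
  have rGamma_k: "rGamma (b + of_nat k) = pochhammer (b + of_nat k) l * rGamma (b + of_nat (k + l))"
    using pochhammer_rGamma[of "b + of_nat k" l] by (simp add: add.assoc)
  have rGamma_via_pochhammer: "rGamma (b + of_nat r) = pochhammer (b + of_nat r) (l - r) * rGamma (b + of_nat l)"
    if "r \<le> l" for r
    using that pochhammer_rGamma[of "b + of_nat r" "l - r"] by (simp add: add.assoc)
  have "rGamma (b + of_nat (k + l)) *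
        (\<Sum>r\<le>min k l. rGamma (b + of_nat r) / (fact r * fact (k - r) * fact (l - r)))
      = rGamma (b + of_nat (k + l)) * rGamma (b + of_nat l) *
        (\<Sum>r\<le>min k l. pochhammer (b + of_nat r) (l - r) / (fact r * fact (k - r) * fact (l - r)))"
    unfolding sum_distrib_left
  proof (intro sum.cong refl)
    fix r assume "r \<in> {..min k l}"
    then show "rGamma (b + of_nat (k + l)) * (rGamma (b + of_nat r) / (fact r * fact (k - r) * fact (l - r))) =
        rGamma (b + of_nat (k + l)) * rGamma (b + of_nat l) *
          (pochhammer (b + of_nat r) (l - r) / (fact r * fact (k - r) * fact (l - r)))"
      using rGamma_via_pochhammer[of r] by simp
  qed
  also have "\<dots> = rGamma (b + of_nat (k + l)) * rGamma (b + of_nat l) *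
        (pochhammer (b + of_nat k) l / (fact k * fact l))"
    by (simp only: pochhammer_add_of_nat_div_fact)
  finally show ?thesis
    by (simp add: rGamma_k mult_ac)
qed

lemma norm_pochhammer_ge_one:
  fixes a :: complex
  assumes "Re a \<ge> 1"
  shows "1 \<le> norm (pochhammer a n)"
proof -
  have "1 \<le> norm (a + of_nat i)" for i
    using assms complex_Re_le_cmod[of "a + of_nat i"] by simp
  then show ?thesis
    unfolding pochhammer_prod prod_norm[symmetric] by (intro prod_ge_1)
qed

lemma rGamma_add_of_nat_bounded:
  fixes b :: complex
  obtains K where "\<And>n. norm (rGamma (b + of_nat n)) \<le> K"
proof -
  obtain N :: nat where N: "1 - Re b \<le> of_nat N"
    using real_arch_simple by blast
  have "norm (rGamma (b + of_nat (n + N))) \<le> norm (rGamma (b + of_nat N))" for n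
  proof -
    have "rGamma (b + of_nat N) = pochhammer (b + of_nat N) n * rGamma (b + of_nat (n + N))"
      using pochhammer_rGamma[of "b + of_nat N" n] by (simp add: algebra_simps)
    moreover have "1 \<le> norm (pochhammer (b + of_nat N) n)"
      using N by (intro norm_pochhammer_ge_one) simp
    ultimately show ?thesis
      by (simp add: norm_mult mult_le_cancel_right1)
  qed
  then have "Bseq (\<lambda>n. rGamma (b + of_nat (n + N)))"
    by (rule BseqI')
  then have "Bseq (\<lambda>n. rGamma (b + of_nat n))"
    by (rule Bseq_offset)
  then show ?thesis
    using that by (metis BseqE)
qed

lemma power_div_fact_summable_on:
  fixes c :: real
  assumes "c \<ge> 0"
  shows "(\<lambda>n. c ^ n / fact n) summable_on UNIV"
proof -
  have "(\<lambda>n. c ^ n / fact n) sums exp c"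
    using exp_converges[of c] by (simp add: divide_inverse mult.commute)
  then show ?thesis
    using assms by (intro has_sum_imp_summable sums_nonneg_imp_has_sum) auto
qed

lemma power_add_div_fact:
  fixes U V :: "'a::{real_normed_field,banach}"
  shows "(U + V) ^ m / fact m = (\<Sum>j\<le>m. U ^ j / fact j * (V ^ (m - j) / fact (m - j)))"
  using exp_series_add_commuting[of U V m] by (simp add: scaleR_conv_of_real divide_inverse mult_ac)

lemma has_sum_product:
  fixes f :: "'a \<Rightarrow> 'c::{real_normed_field,banach}" and g :: "'b \<Rightarrow> 'c"
  assumes "(f has_sum A) X" "(g has_sum B) Y"
    and "(\<lambda>x. norm (f x)) summable_on X" "(\<lambda>y. norm (g y)) summable_on Y"
  shows "((\<lambda>(x, y). f x * g y) has_sum A * B) (X \<times> Y)"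
proof (rule has_sum_SigmaI)
  have "(\<lambda>y. norm (f x * g y)) summable_on Y" for x
    using summable_on_cmult_right[OF assms(4), of "norm (f x)"] by (simp add: norm_mult)
  moreover have "(\<lambda>x. norm (\<Sum>\<^sub>\<infinity>y\<in>Y. norm (f x * g y))) summable_on X"
    using summable_on_cmult_left[OF assms(3), of "\<Sum>\<^sub>\<infinity>y\<in>Y. norm (g y)"]
    by (simp add: norm_mult infsum_cmult_right' infsum_nonneg)
  ultimately have "(\<lambda>(x, y). f x * g y) abs_summable_on X \<times> Y"
    by (intro Infinite_Sum.abs_summable_on_Sigma_iff[THEN iffD2]) auto
  then show "(\<lambda>(x, y). f x * g y) summable_on X \<times> Y"
    by (rule abs_summable_summable)
  show "((\<lambda>y. (\<lambda>(x, y). f x * g y) (x, y)) has_sum f x * B) Y" for x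
    using has_sum_cmult_right[OF assms(2)] by simp
  show "((\<lambda>x. f x * B) has_sum A * B) X"
    using assms(1) by (rule has_sum_cmult_left)
qed

lemma summable_on_product_nonneg:
  fixes f :: "'a \<Rightarrow> real" and g :: "'b \<Rightarrow> real"
  assumes "f summable_on X" "g summable_on Y" "\<And>x. f x \<ge> 0" "\<And>y. g y \<ge> 0"
  shows "(\<lambda>(x, y). f x * g y) summable_on X \<times> Y"
proof -
  have "(\<lambda>x. norm (f x)) summable_on X" "(\<lambda>y. norm (g y)) summable_on Y"
    using assms by simp_all
  then show ?thesis
    using has_sum_product[OF has_sum_infsum has_sum_infsum] assms by (metis has_sum_imp_summable)
qed

lemma has_sum_by_antidiagonals:
  fixes f :: "nat \<times> nat \<Rightarrow> 'a::{topological_comm_monoid_add,t3_space}"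
  assumes "f summable_on UNIV" "((\<lambda>m. \<Sum>j\<le>m. f (j, m - j)) has_sum S) UNIV"
  shows "(f has_sum S) UNIV"
proof -
  define g where "g = (\<lambda>(m, j). f (j, m - j))"
  have reindex: "(g has_sum s) (Sigma UNIV (\<lambda>m. {..m})) \<longleftrightarrow> (f has_sum s) UNIV" for s
    unfolding g_def
    by (rule has_sum_reindex_bij_witness[where i = "\<lambda>(j, i). (j + i, j)" and j = "\<lambda>(m, j). (j, m - j)"])
       auto
  have "g summable_on Sigma UNIV (\<lambda>m. {..m})"
    using assms(1) reindex unfolding summable_on_def by blast
  moreover have "((\<lambda>j. g (m, j)) has_sum (\<Sum>j\<le>m. f (j, m - j))) {..m}" for m
    unfolding g_def by (simp add: has_sum_finite)
  ultimately have "(g has_sum S) (Sigma UNIV (\<lambda>m. {..m}))"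
    using assms(2) by (intro has_sum_SigmaI)
  then show ?thesis
    using reindex by blast
qed

lemma has_sum_by_common_shift:
  fixes g :: "nat \<times> nat \<times> nat \<Rightarrow> 'a::{topological_comm_monoid_add,t3_space}"
  assumes "g summable_on UNIV"
    and "((\<lambda>(k, l). \<Sum>r\<le>min k l. g (r, k - r, l - r)) has_sum S) UNIV"
  shows "(g has_sum S) UNIV"
proof -
  define h where "h = (\<lambda>((k, l), r). g (r, k - r, l - r))"
  have reindex: "(h has_sum s) (Sigma UNIV (\<lambda>(k, l). {..min k l})) \<longleftrightarrow> (g has_sum s) UNIV" for s
    unfolding h_def
    by (rule has_sum_reindex_bij_witness[where i = "\<lambda>(r, j, i). ((r + j, r + i), r)"
          and j = "\<lambda>((k, l), r). (r, k - r, l - r)"])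
       auto
  have "h summable_on Sigma UNIV (\<lambda>(k, l). {..min k l})"
    using assms(1) reindex unfolding summable_on_def by blast
  moreover have "((\<lambda>r. h (kl, r)) has_sum (\<lambda>(k, l). \<Sum>r\<le>min k l. g (r, k - r, l - r)) kl)
      ((\<lambda>(k, l). {..min k l}) kl)" for kl
    unfolding h_def by (cases kl) (simp add: has_sum_finite)
  ultimately have "(h has_sum S) (Sigma UNIV (\<lambda>(k, l). {..min k l}))"
    using assms(2) by (intro has_sum_SigmaI)
  then show ?thesis
    using reindex by blast
qed

definition hyp0F1_reg :: "complex \<Rightarrow> complex \<Rightarrow> complex" where
  "hyp0F1_reg b z = (\<Sum>n. rGamma (b + of_nat n) / fact n * z ^ n)"

lemma hyp0F1_reg_has_sum:
  "((\<lambda>n. rGamma (b + of_nat n) / fact n * z ^ n) has_sum hyp0F1_reg b z) UNIV"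
proof -
  obtain K where K: "\<And>n. norm (rGamma (b + of_nat n)) \<le> K"
    using rGamma_add_of_nat_bounded[of b] by blast
  have "norm (rGamma (b + of_nat n) / fact n * z ^ n) \<le> K * (norm z ^ n / fact n)" for n
  proof -
    have "norm (rGamma (b + of_nat n) / fact n * z ^ n) = norm (rGamma (b + of_nat n)) * (norm z ^ n / fact n)"
      by (simp add: norm_mult norm_divide norm_power)
    also have "\<dots> \<le> K * (norm z ^ n / fact n)"
      by (intro mult_right_mono K) simp
    finally show ?thesis .
  qed
  moreover have "summable (\<lambda>n. K * (norm z ^ n / fact n))"
    using summable_exp[of "norm z"] by (intro summable_mult) (simp add: divide_inverse mult.commute)
  ultimately have norm_summable: "summable (\<lambda>n. norm (rGamma (b + of_nat n) / fact n * z ^ n))"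
    by (intro summable_norm_comparison_test[of _ "\<lambda>n. K * (norm z ^ n / fact n)"]) blast+
  show ?thesis
    unfolding hyp0F1_reg_def
    using norm_summable_imp_has_sum[OF norm_summable summable_sums[OF summable_norm_cancel[OF norm_summable]]] .
qed

lemma besselJ_eq_hyp0F1_reg:
  "besselJ \<mu> z = (z / 2) powr \<mu> * hyp0F1_reg (\<mu> + 1) (- ((z / 2) ^ 2))"
proof -
  have "(-1) ^ n * rGamma (\<mu> + of_nat n + 1) / of_nat (fact n) * (z / 2) powr \<mu> * (z / 2) ^ (2 * n) =
      (z / 2) powr \<mu> * (rGamma (\<mu> + 1 + of_nat n) / fact n * (- ((z / 2) ^ 2)) ^ n)" for n
  proof -
    have "(- ((z / 2) ^ 2)) ^ n = (-1) ^ n * (z / 2) ^ (2 * n)"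
      by (simp add: power_minus' power_mult)
    then show ?thesis
      by (simp add: add_ac field_simps)
  qed
  then have "besselJ \<mu> z = (\<Sum>n. (z / 2) powr \<mu> * (rGamma (\<mu> + 1 + of_nat n) / fact n * (- ((z / 2) ^ 2)) ^ n))"
    unfolding besselJ_def by (simp only:)
  also have "\<dots> = (z / 2) powr \<mu> * hyp0F1_reg (\<mu> + 1) (- ((z / 2) ^ 2))"
    unfolding hyp0F1_reg_def
    by (rule suminf_mult[OF sums_summable[OF has_sum_imp_sums[OF hyp0F1_reg_has_sum]]])
  finally show ?thesis .
qed

lemma hyp0F1_reg_add_has_sum:
  "((\<lambda>(j, i). rGamma (b + of_nat (j + i)) * (U ^ j / fact j) * (V ^ i / fact i))
     has_sum hyp0F1_reg b (U + V)) UNIV"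
proof (rule has_sum_by_antidiagonals)
  obtain K where K: "\<And>n. norm (rGamma (b + of_nat n)) \<le> K"
    using rGamma_add_of_nat_bounded[of b] by blast
  have "(\<lambda>(j, i). norm U ^ j / fact j * (norm V ^ i / fact i)) summable_on UNIV \<times> UNIV"
    by (intro summable_on_product_nonneg power_div_fact_summable_on) auto
  then have "(\<lambda>(j, i). K * (norm U ^ j / fact j * (norm V ^ i / fact i))) summable_on UNIV"
    using summable_on_cmult_right by (fastforce simp: case_prod_unfold)
  then show "(\<lambda>(j, i). rGamma (b + of_nat (j + i)) * (U ^ j / fact j) * (V ^ i / fact i)) summable_on UNIV"
    unfolding summable_on_iff_abs_summable_on_complex
  proof (rule Infinite_Sum.abs_summable_on_comparison_test')
    fix p :: "nat \<times> nat"
    obtain j i where p: "p = (j, i)" by (cases p)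
    have "norm (rGamma (b + of_nat (j + i)) * (U ^ j / fact j) * (V ^ i / fact i))
        = norm (rGamma (b + of_nat (j + i))) * (norm U ^ j / fact j * (norm V ^ i / fact i))"
      by (simp add: norm_mult norm_divide norm_power)
    also have "\<dots> \<le> K * (norm U ^ j / fact j * (norm V ^ i / fact i))"
      by (intro mult_right_mono K) simp
    finally show "norm ((\<lambda>(j, i). rGamma (b + of_nat (j + i)) * (U ^ j / fact j) * (V ^ i / fact i)) p)
        \<le> (\<lambda>(j, i). K * (norm U ^ j / fact j * (norm V ^ i / fact i))) p"
      by (simp add: p)
  qed
  have "(\<Sum>j\<le>m. rGamma (b + of_nat (j + (m - j))) * (U ^ j / fact j) * (V ^ (m - j) / fact (m - j)))
      = rGamma (b + of_nat m) / fact m * (U + V) ^ m" for m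
  proof -
    have "(\<Sum>j\<le>m. rGamma (b + of_nat (j + (m - j))) * (U ^ j / fact j) * (V ^ (m - j) / fact (m - j)))
        = rGamma (b + of_nat m) * (\<Sum>j\<le>m. U ^ j / fact j * (V ^ (m - j) / fact (m - j)))"
      unfolding sum_distrib_left by (intro sum.cong refl) (simp add: mult_ac)
    also have "\<dots> = rGamma (b + of_nat m) * ((U + V) ^ m / fact m)"
      by (simp only: power_add_div_fact)
    finally show ?thesis
      by simp
  qed
  then show "((\<lambda>m. \<Sum>j\<le>m. (\<lambda>(j, i). rGamma (b + of_nat (j + i)) * (U ^ j / fact j) * (V ^ i / fact i)) (j, m - j))
      has_sum hyp0F1_reg b (U + V)) UNIV"
    using hyp0F1_reg_has_sum by simp
qed

definition hyp0F1_reg_product_term :: "complex \<Rightarrow> complex \<Rightarrow> complex \<Rightarrow> nat \<times> nat \<times> nat \<Rightarrow> complex" where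
  "hyp0F1_reg_product_term b U V = (\<lambda>(r, p). rGamma (b + of_nat r) / fact r * (U * V) ^ r *
     (case p of (j, i) \<Rightarrow> rGamma (b + 2 * of_nat r + of_nat (j + i)) * (U ^ j / fact j) * (V ^ i / fact i)))"

lemma hyp0F1_reg_product_term_summable: "hyp0F1_reg_product_term b U V summable_on UNIV"
proof -
  obtain K where K: "\<And>n. norm (rGamma (b + of_nat n)) \<le> K"
    using rGamma_add_of_nat_bounded[of b] by blast
  then have "K \<ge> 0"
    using norm_ge_zero order_trans by blast
  define bound where "bound = (\<lambda>(r, j, i). K\<^sup>2 * ((norm U * norm V) ^ r / fact r *
      (norm U ^ j / fact j * (norm V ^ i / fact i))))"
  have "(\<lambda>(j, i). norm U ^ j / fact j * (norm V ^ i / fact i)) summable_on UNIV \<times> UNIV"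
    by (intro summable_on_product_nonneg power_div_fact_summable_on) auto
  then have "(\<lambda>(r, p). (norm U * norm V) ^ r / fact r * (\<lambda>(j, i). norm U ^ j / fact j * (norm V ^ i / fact i)) p)
      summable_on UNIV \<times> UNIV"
    by (intro summable_on_product_nonneg power_div_fact_summable_on) (auto split: prod.split)
  then have "bound summable_on UNIV"
    unfolding bound_def using summable_on_cmult_right[of _ UNIV "K\<^sup>2"]
    by (fastforce simp: case_prod_unfold)
  then show ?thesis
    unfolding summable_on_iff_abs_summable_on_complex
  proof (rule Infinite_Sum.abs_summable_on_comparison_test')
    fix q :: "nat \<times> nat \<times> nat"
    obtain r j i where q: "q = (r, j, i)" by (cases q)
    have K_shift: "norm (rGamma (b + 2 * of_nat r + of_nat (j + i))) \<le> K"
      using K[of "2 * r + (j + i)"] by (simp add: add.assoc)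
    have "norm (hyp0F1_reg_product_term b U V q) =
        norm (rGamma (b + of_nat r)) * ((norm U * norm V) ^ r / fact r) *
        (norm (rGamma (b + 2 * of_nat r + of_nat (j + i))) * (norm U ^ j / fact j * (norm V ^ i / fact i)))"
      unfolding hyp0F1_reg_product_term_def q
      by (simp add: norm_mult norm_divide norm_power power_mult_distrib mult_ac)
    also have "\<dots> \<le> K * ((norm U * norm V) ^ r / fact r) * (K * (norm U ^ j / fact j * (norm V ^ i / fact i)))"
      using \<open>K \<ge> 0\<close> by (intro mult_mono mult_right_mono K K_shift) auto
    finally show "norm (hyp0F1_reg_product_term b U V q) \<le> bound q"
      by (simp add: bound_def q power2_eq_square mult_ac)
  qed
qed

lemma hyp0F1_reg_product_term_shift:
  assumes "r \<le> min k l"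
  shows "hyp0F1_reg_product_term b U V (r, k - r, l - r) =
           U ^ k * V ^ l * rGamma (b + of_nat (k + l)) *
           (rGamma (b + of_nat r) / (fact r * fact (k - r) * fact (l - r)))"
proof -
  obtain j i where k: "k = r + j" and l: "l = r + i"
    using assms by (metis le_add_diff_inverse min.bounded_iff)
  have "b + 2 * of_nat r + of_nat (j + i) = b + of_nat (k + l)"
    by (simp add: k l)
  moreover have "(U * V) ^ r * U ^ j * V ^ i = U ^ k * V ^ l"
    by (simp add: k l power_add power_mult_distrib)
  ultimately show ?thesis
    unfolding hyp0F1_reg_product_term_def by (simp add: k l field_simps)
qed

lemma sum_hyp0F1_reg_product_term:
  "(\<Sum>r\<le>min k l. hyp0F1_reg_product_term b U V (r, k - r, l - r)) =
     rGamma (b + of_nat k) / fact k * U ^ k * (rGamma (b + of_nat l) / fact l * V ^ l)"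
proof -
  have "(\<Sum>r\<le>min k l. hyp0F1_reg_product_term b U V (r, k - r, l - r)) =
      U ^ k * V ^ l * (rGamma (b + of_nat (k + l)) *
        (\<Sum>r\<le>min k l. rGamma (b + of_nat r) / (fact r * fact (k - r) * fact (l - r))))"
    by (simp add: hyp0F1_reg_product_term_shift sum_distrib_left mult_ac)
  also have "\<dots> = U ^ k * V ^ l * (rGamma (b + of_nat k) * rGamma (b + of_nat l) / (fact k * fact l))"
    by (simp only: rGamma_mult_rGamma_div_fact)
  finally show ?thesis
    by (simp add: field_simps)
qed

lemma hyp0F1_reg_mult_sums:
  "(\<lambda>r. rGamma (b + of_nat r) / fact r * (U * V) ^ r * hyp0F1_reg (b + 2 * of_nat r) (U + V))
     sums (hyp0F1_reg b U * hyp0F1_reg b V)"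
proof -
  have norm_summable: "(\<lambda>n. norm (rGamma (b + of_nat n) / fact n * z ^ n)) summable_on UNIV" for z
    using has_sum_imp_summable[OF hyp0F1_reg_has_sum] unfolding summable_on_iff_abs_summable_on_complex .
  have "((\<lambda>(k, l). rGamma (b + of_nat k) / fact k * U ^ k * (rGamma (b + of_nat l) / fact l * V ^ l))
      has_sum hyp0F1_reg b U * hyp0F1_reg b V) (UNIV \<times> UNIV)"
    by (rule has_sum_product[OF hyp0F1_reg_has_sum hyp0F1_reg_has_sum norm_summable norm_summable])
  then have "(hyp0F1_reg_product_term b U V has_sum hyp0F1_reg b U * hyp0F1_reg b V) UNIV"
    unfolding UNIV_Times_UNIV sum_hyp0F1_reg_product_term[symmetric]
    by (rule has_sum_by_common_shift[OF hyp0F1_reg_product_term_summable])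
  then have "(hyp0F1_reg_product_term b U V has_sum hyp0F1_reg b U * hyp0F1_reg b V) (UNIV \<times> UNIV)"
    by (simp only: UNIV_Times_UNIV)
  moreover have "((\<lambda>p. hyp0F1_reg_product_term b U V (r, p)) has_sum
      rGamma (b + of_nat r) / fact r * (U * V) ^ r * hyp0F1_reg (b + 2 * of_nat r) (U + V)) UNIV" for r
    unfolding hyp0F1_reg_product_term_def prod.case by (rule has_sum_cmult_right[OF hyp0F1_reg_add_has_sum])
  ultimately show ?thesis
    by (intro has_sum_imp_sums) (rule has_sum_SigmaD)
qed

lemma besselJ_mult_besselJ_sums:
  fixes \<nu> :: complex and p q t w :: real
  assumes "p > 0" "q > 0" "t > 0" "t\<^sup>2 = p\<^sup>2 + q\<^sup>2" "2 * w * t = p * q"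
  shows "(\<lambda>r. of_real w powr \<nu> * (rGamma (\<nu> + of_nat r + 1) / of_nat (fact r)) * of_real w ^ (2 * r)
              * besselJ (\<nu> + 2 * of_nat r) (of_real t))
           sums (besselJ \<nu> (of_real p) * besselJ \<nu> (of_real q))"
proof -
  define u v s where "u = complex_of_real (p / 2)" and "v = complex_of_real (q / 2)"
    and "s = complex_of_real (t / 2)"
  have "s \<noteq> 0"
    using \<open>t > 0\<close> by (simp add: s_def)
  have "w * (t / 2) = p / 2 * (q / 2)"
    using assms(5) by (simp add: field_simps)
  then have ws: "of_real w * s = u * v"
    unfolding u_def v_def s_def by (metis of_real_mult)
  have "(t / 2)\<^sup>2 = (p / 2)\<^sup>2 + (q / 2)\<^sup>2"
    using assms(4) by (simp add: power_divide add_divide_distrib)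
  then have s2: "s\<^sup>2 = u\<^sup>2 + v\<^sup>2"
    unfolding u_def v_def s_def by (metis of_real_power of_real_add)
  have powr_mult_of_real: "(of_real x * of_real y) powr \<nu> = of_real x powr \<nu> * of_real y powr \<nu>"
    if "x \<ge> 0" "y \<ge> 0" for x y :: real
    using that by (intro powr_times_real) auto
  have "w \<ge> 0"
    using assms by (smt (verit) zero_less_mult_iff)
  then have "of_real w powr \<nu> * s powr \<nu> = (of_real w * s) powr \<nu>"
    unfolding s_def using \<open>t > 0\<close> by (intro powr_mult_of_real[symmetric]) auto
  also have "\<dots> = (u * v) powr \<nu>"
    by (simp only: ws)
  also have "\<dots> = u powr \<nu> * v powr \<nu>"
    unfolding u_def v_def using assms by (intro powr_mult_of_real) auto
  finally have powr_ws: "of_real w powr \<nu> * s powr \<nu> = u powr \<nu> * v powr \<nu>" .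
  have summand: "of_real w powr \<nu> * (rGamma (\<nu> + of_nat r + 1) / of_nat (fact r)) * of_real w ^ (2 * r)
        * besselJ (\<nu> + 2 * of_nat r) (of_real t)
      = u powr \<nu> * v powr \<nu> * (rGamma (\<nu> + 1 + of_nat r) / fact r * ((- u\<^sup>2) * (- v\<^sup>2)) ^ r
          * hyp0F1_reg (\<nu> + 1 + 2 * of_nat r) ((- u\<^sup>2) + (- v\<^sup>2)))" for r
  proof -
    have "s powr (\<nu> + 2 * of_nat r) = s powr \<nu> * s ^ (2 * r)"
      using powr_nat'[of s "2 * r"] \<open>s \<noteq> 0\<close> by (simp add: powr_add)
    then have "besselJ (\<nu> + 2 * of_nat r) (of_real t) =
        s powr \<nu> * s ^ (2 * r) * hyp0F1_reg (\<nu> + 1 + 2 * of_nat r) ((- u\<^sup>2) + (- v\<^sup>2))"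
      using s2 by (simp add: besselJ_eq_hyp0F1_reg s_def add_ac)
    moreover have "of_real w ^ (2 * r) * s ^ (2 * r) = ((- u\<^sup>2) * (- v\<^sup>2)) ^ r"
    proof -
      have "of_real w ^ (2 * r) * s ^ (2 * r) = (u * v) ^ (2 * r)"
        by (simp only: ws flip: power_mult_distrib)
      then show ?thesis
        by (simp add: power_mult power_mult_distrib)
    qed
    ultimately show ?thesis
      using powr_ws by (simp add: add_ac) (simp add: mult_ac)
  qed
  have product: "besselJ \<nu> (of_real p) * besselJ \<nu> (of_real q) =
      u powr \<nu> * v powr \<nu> * (hyp0F1_reg (\<nu> + 1) (- u\<^sup>2) * hyp0F1_reg (\<nu> + 1) (- v\<^sup>2))"
    by (simp add: besselJ_eq_hyp0F1_reg u_def v_def mult_ac)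
  show ?thesis
    unfolding summand product by (intro sums_mult hyp0F1_reg_mult_sums)
qed

theorem mainTheorem12:
  fixes \<nu> :: complex and a b x :: real
  assumes "a > 0" and "b > 0" and "x > 0"
  shows "(\<lambda>r. (of_real (a * b * x / (2 * sqrt (a\<^sup>2 + b\<^sup>2)))) powr \<nu>
              * (rGamma (\<nu> + of_nat r + 1) / of_nat (fact r))
              * (of_real (a * b * x / (2 * sqrt (a\<^sup>2 + b\<^sup>2)))) ^ (2 * r)
              * besselJ (\<nu> + 2 * of_nat r) (of_real (x * sqrt (a\<^sup>2 + b\<^sup>2))))
         sums (besselJ \<nu> (of_real (a * x)) * besselJ \<nu> (of_real (b * x)))"
proof -
  have sqrt_pos: "sqrt (a\<^sup>2 + b\<^sup>2) > 0"
    using assms by (simp add: add_pos_pos)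
  show ?thesis
  proof (rule besselJ_mult_besselJ_sums)
    show "2 * (a * b * x / (2 * sqrt (a\<^sup>2 + b\<^sup>2))) * (x * sqrt (a\<^sup>2 + b\<^sup>2)) = a * x * (b * x)"
      using sqrt_pos by (simp add: field_simps)
    show "(x * sqrt (a\<^sup>2 + b\<^sup>2))\<^sup>2 = (a * x)\<^sup>2 + (b * x)\<^sup>2"
      by (simp add: power_mult_distrib algebra_simps)
  qed (use assms sqrt_pos in simp_all)
qed

end
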